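(* Let $S(A)=(a_n)$ be an independent Stanley sequence with character $\lambda$. Let $\ell$ be the minimum adequate integer for $S(A)$, and let $k\ge \ell$. Let $c$ be an integer with $$\lambda\le c\le a_{2^k-2^\ell}-\lambda.$$ Then the set $$A_k(c,A)=\{a_i\mid 0\le i<2^k\}\cup\{c+a_i\mid 2^k\le i<2^{k+1}\}$$ is 3-free, and the Stanley sequence $S_k(c,A)=S(A_k(c,A))$ is a regular Stanley sequence with core $S(A)$.
   Context: A set of non-negative integers is 3-free if no three of its elements form an arithmetic progression. For a finite 3-free set $A=\{a_0<\cdots<a_k\}$ of non-negative integers, the Stanley sequence $S(A)=(a_n)_{n\ge0}$ is the increasing sequence with initial terms $a_0,\ldots,a_k$ in which each subsequent $a_{n+1}$ is the smallest integer greater than $a_n$ such that $\{a_0,\ldots,a_{n+1}\}$ is 3-free. Throughout, Stanley sequences are in root position ($a_0=0$). A finite set $A'$ with $S(A')=S(A)$ is a nucleating set; a minimal nucleating set is one of minimal cardinality. A Stanley sequence $(a_n)$ is independent with character $\lambda$ if for all sufficiently large $k$: $a_{2^k+i}=a_{2^k}+a_i$ for $0\le i<2^k$, and $a_{2^k}=2a_{2^k-1}-\lambda+1$. An integer $k_0$ is adequate for an independent $S(A)$ if (i) these equations hold for all $k\ge k_0$ and (ii) $a_{2^{k_0}}$ is not contained in the minimal nucleating set of $S(A)$. A Stanley sequence $(b_n)$ is regular with core $(a'_n)$ if there exist constants $\lambda,\sigma$ and an independent Stanley sequence $(a'_n)$ of character $\lambda$ such that for all large $k$ and $0\le i<2^k$: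 $b_{2^k-\sigma+i}=b_{2^k-\sigma}+a'_i$ and $b_{2^k-\sigma}=2b_{2^k-\sigma-1}-\lambda+1$ (such data are unique). *)

theory Defs
  imports Main
begin

definition three_free :: "nat set \<Rightarrow> bool" where
  "three_free S \<longleftrightarrow>
     (\<forall>x\<in>S. \<forall>y\<in>S. \<forall>z\<in>S. x < y \<longrightarrow> y < z \<longrightarrow> x + z \<noteq> 2 * y)"

primrec stanley_list :: "nat set \<Rightarrow> nat \<Rightarrow> nat list" where
  "stanley_list A 0 = []"
| "stanley_list A (Suc n) =
     (let xs = stanley_list A n in
      if n < card A then xs @ [sorted_list_of_set A ! n]
      else xs @ [LEAST x. last xs < x \<and> three_free (insert x (set xs))])"

definition stanley :: "nat set \<Rightarrow> nat \<Rightarrow> nat" where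
  "stanley A n = stanley_list A (Suc n) ! n"

definition stanley_init :: "nat set \<Rightarrow> bool" where
  "stanley_init A \<longleftrightarrow> finite A \<and> three_free A \<and> 0 \<in> A"

definition nucleating_set :: "nat set \<Rightarrow> nat set \<Rightarrow> bool" where
  "nucleating_set A B \<longleftrightarrow> stanley_init B \<and> stanley B = stanley A"

definition minimal_nucleating_set :: "nat set \<Rightarrow> nat set \<Rightarrow> bool" where
  "minimal_nucleating_set A B \<longleftrightarrow> nucleating_set A B \<and>
     (\<forall>B'. nucleating_set A B' \<longrightarrow> card B \<le> card B')"

definition indep_eqs :: "(nat \<Rightarrow> nat) \<Rightarrow> int \<Rightarrow> nat \<Rightarrow> bool" where
  "indep_eqs a lam k \<longleftrightarrow>
     (\<forall>i < 2^k. a (2^k + i) = a (2^k) + a i) \<and>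
     int (a (2^k)) = 2 * int (a (2^k - 1)) - lam + 1"

definition independent :: "(nat \<Rightarrow> nat) \<Rightarrow> int \<Rightarrow> bool" where
  "independent a lam \<longleftrightarrow> (\<exists>K. \<forall>k\<ge>K. indep_eqs a lam k)"

definition adequate :: "nat set \<Rightarrow> int \<Rightarrow> nat \<Rightarrow> bool" where
  "adequate A lam k0 \<longleftrightarrow>
     (\<forall>k\<ge>k0. indep_eqs (stanley A) lam k) \<and>
     (\<forall>M. minimal_nucleating_set A M \<longrightarrow> stanley A (2^k0) \<notin> M)"

definition regular_with_core :: "(nat \<Rightarrow> nat) \<Rightarrow> (nat \<Rightarrow> nat) \<Rightarrow> bool" where
  "regular_with_core b a \<longleftrightarrow>
     (\<exists>lam::int. \<exists>\<sigma>::int. independent a lam \<and>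
        (\<exists>K. \<forall>k\<ge>K. \<forall>i < 2^k.
           b (nat (2^k - \<sigma>) + i) = b (nat (2^k - \<sigma>)) + a i \<and>
           int (b (nat (2^k - \<sigma>))) = 2 * int (b (nat (2^k - \<sigma> - 1))) - lam + 1))"

definition Ak_set :: "nat set \<Rightarrow> nat \<Rightarrow> int \<Rightarrow> nat set" where
  "Ak_set A k c = {stanley A i | i. i < 2^k} \<union>
                  {nat (c + int (stanley A i)) | i. 2^k \<le> i \<and> i < 2^(k+1)}"

end

theory Submission
  imports Defs
begin

text \<open>Write a for S(A). The candidate b agrees with a on the indices below 2^k, and for
  J \<ge> k its block of indices 2^J \<le> i < 2^(J+1) is the corresponding block of a, which by
  independence is a translate of the first 2^J terms, raised by 2^(J-k) c. Doubling the raise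
  from block to block keeps the recursion b_{2^J} = 2 b_{2^J - 1} + 1 - lam, so b is regular
  with core a. By induction on J, the first 2^J terms of b are 3-free, and every non-term of b
  between b_{2^(k+1) - 1} and b_{2^J - 1} closes a progression of smaller terms; both reduce to
  statements about the blocks of a, where greediness beyond a_{2^l - 1} (this is where
  adequacy enters) and the bounds lam \<le> c \<le> a_{2^k - 2^l} - lam are used. Hence b is the
  greedy continuation of its first 2^(k+1) terms, which form A_k(c,A).\<close>

lemma three_free_subset: "three_free S \<Longrightarrow> T \<subseteq> S \<Longrightarrow> three_free T"
  unfolding three_free_def by blast

lemma three_free_insert_greater:
  assumes "three_free S" "\<forall>s\<in>S. s < x"
    and "\<forall>p\<in>S. \<forall>q\<in>S. p < q \<longrightarrow> p + x \<noteq> 2 * q"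
  shows "three_free (insert x S)"
  using assms unfolding three_free_def by (metis insert_iff less_asym)

lemma three_free_insertD:
  assumes "three_free (insert x S)" "p \<in> S" "q \<in> S" "p < q" "q < x"
  shows "p + x \<noteq> 2 * q"
  using assms unfolding three_free_def by blast

definition three_free_int :: "int set \<Rightarrow> bool" where
  "three_free_int X \<longleftrightarrow> (\<forall>x\<in>X. \<forall>y\<in>X. \<forall>z\<in>X. x + z = 2 * y \<longrightarrow> x = z)"

lemma three_free_intI:
  "(\<And>x y z. x \<in> X \<Longrightarrow> y \<in> X \<Longrightarrow> z \<in> X \<Longrightarrow> x + z = 2 * y \<Longrightarrow> x < z \<Longrightarrow> False)
   \<Longrightarrow> three_free_int X"
  unfolding three_free_int_def by (metis add.commute linorder_neqE)

lemma three_free_intD: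
  "three_free_int X \<Longrightarrow> x \<in> X \<Longrightarrow> y \<in> X \<Longrightarrow> z \<in> X \<Longrightarrow> x + z = 2 * y \<Longrightarrow> x = z"
  unfolding three_free_int_def by blast

text \<open>Every non-term of f beyond t closes a progression of smaller terms; this is what the
  greedy construction guarantees for a Stanley sequence beyond its initial set.\<close>
definition greedy_above :: "(nat \<Rightarrow> nat) \<Rightarrow> nat \<Rightarrow> bool" where
  "greedy_above f t \<longleftrightarrow> (\<forall>x. t < x \<longrightarrow> x \<notin> range f \<longrightarrow>
     (\<exists>p q. p \<in> range f \<and> q \<in> range f \<and> p < q \<and> q < x \<and> p + x = 2 * q))"

lemma greedy_aboveD:
  assumes "greedy_above f t" "t < x" "x \<notin> range f"
  obtains p q where "p \<in> range f" "q \<in> range f" "p < q" "q < x" "p + x = 2 * q"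
  using assms unfolding greedy_above_def by blast

lemma greedy_above_mono: "greedy_above f t \<Longrightarrow> t \<le> t' \<Longrightarrow> greedy_above f t'"
  unfolding greedy_above_def by force

lemma lessThan_pow2_Suc: "{..<(2::nat)^Suc J} = {..<2^J} \<union> (+) (2^J) ` {..<2^J}"
proof (rule set_eqI, rule iffI)
  fix i :: nat assume "i \<in> {..<2^Suc J}"
  then show "i \<in> {..<2^J} \<union> (+) (2^J) ` {..<2^J}"
    by (cases "i < 2^J") (auto intro!: image_eqI[of _ _ "i - 2^J"])
qed auto

text \<open>The J with 2^J \<le> i < 2^(J+1), for i > 0.\<close>
definition dyadic_block :: "nat \<Rightarrow> nat" where "dyadic_block i = (LEAST J. i < 2^Suc J)"

lemma dyadic_block_eqI:
  assumes "2^J \<le> i" "i < 2^Suc J"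
  shows "dyadic_block i = J"
  unfolding dyadic_block_def
proof (rule Least_equality)
  fix J' assume "i < (2::nat)^Suc J'"
  then have "(2::nat)^J < 2^Suc J'" using assms(1) by linarith
  then show "J \<le> J'" by (subst (asm) power_strict_increasing_iff) simp_all
qed fact

lemma dyadic_block_bounds:
  assumes "0 < i"
  shows "2^dyadic_block i \<le> i" "i < 2^Suc (dyadic_block i)"
proof -
  have "i < 2^Suc i" using less_exp[of i] unfolding power_Suc by linarith
  then show "i < 2^Suc (dyadic_block i)" unfolding dyadic_block_def by (rule LeastI)
  show "2^dyadic_block i \<le> i"
  proof (cases "dyadic_block i")
    case (Suc m)
    have "\<not> i < 2^Suc m"
      using Least_le[of "\<lambda>J. i < 2^Suc J" m] Suc unfolding dyadic_block_def by auto
    then show ?thesis using Suc by simp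
  qed (use assms in simp)
qed

lemma sorted_list_of_set_image_lessThan:
  assumes "strict_mono (f :: nat \<Rightarrow> 'a :: linorder)"
  shows "sorted_list_of_set (f ` {..<n}) = map f [0..<n]"
proof -
  have "sorted_wrt (<) (map f [0..<n])"
    using assms by (auto simp: sorted_wrt_iff_nth_less strict_mono_less)
  moreover have "set (map f [0..<n]) = f ` {..<n}" by (auto simp: atLeast0LessThan)
  moreover have "length (map f [0..<n]) = card (f ` {..<n})"
    using card_image[OF strict_mono_imp_inj_on[OF assms]] by simp
  ultimately show ?thesis
    using sorted_list_of_set.sorted_key_list_of_set_unique[of "f ` {..<n}" "map f [0..<n]"] by simp
qed

section \<open>Stanley sequences\<close>

lemma stanley_list_Suc: "stanley_list A (Suc n) = stanley_list A n @
   [if n < card A then sorted_list_of_set A ! n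
    else (LEAST x. last (stanley_list A n) < x \<and> three_free (insert x (set (stanley_list A n))))]"
  by (simp add: Let_def)

declare stanley_list.simps(2)[simp del]

lemma length_stanley_list [simp]: "length (stanley_list A n) = n"
  by (induction n) (simp_all add: stanley_list_Suc)

lemma take_stanley_list: "m \<le> n \<Longrightarrow> take m (stanley_list A n) = stanley_list A m"
  by (induction n) (auto simp: stanley_list_Suc le_Suc_eq)

lemma stanley_list_eq_map: "stanley_list A n = map (stanley A) [0..<n]"
proof (rule nth_equalityI)
  fix i assume "i < length (stanley_list A n)"
  then have "i < n" by simp
  then have "stanley_list A n ! i = take (Suc i) (stanley_list A n) ! i" by simp
  also have "\<dots> = stanley A i" using \<open>i < n\<close> by (simp add: take_stanley_list stanley_def)
  finally show "stanley_list A n ! i = map (stanley A) [0..<n] ! i" using \<open>i < n\<close> by simp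
qed simp

lemma stanley_less_card: "n < card A \<Longrightarrow> stanley A n = sorted_list_of_set A ! n"
  by (simp add: stanley_def stanley_list_Suc nth_append)

lemma stanley_ge_card:
  assumes "card A \<le> n" "0 < n"
  shows "stanley A n =
    (LEAST x. stanley A (n - 1) < x \<and> three_free (insert x (stanley A ` {..<n})))"
proof -
  have "last (stanley_list A n) = stanley A (n - 1)"
    using \<open>0 < n\<close> by (simp add: stanley_list_eq_map last_map)
  moreover have "set (stanley_list A n) = stanley A ` {..<n}"
    by (auto simp: stanley_list_eq_map)
  ultimately show ?thesis
    using \<open>card A \<le> n\<close> by (simp add: stanley_def stanley_list_Suc nth_append)
qed

lemma strict_mono_between:
  fixes f :: "nat \<Rightarrow> nat"
  assumes mono: "strict_mono f" and "f j < x" "x \<notin> range f"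
  obtains m where "j < m" "f (m - 1) < x" "x < f m"
proof -
  have "\<exists>m. x < f m"
    using strict_mono_imp_increasing[OF mono, of "Suc x"] by (intro exI[of _ "Suc x"]) simp
  define m where "m = (LEAST m. x < f m)"
  have "x < f m" unfolding m_def using \<open>\<exists>m. x < f m\<close> by (rule LeastI_ex)
  have "j < m"
  proof (rule ccontr)
    assume "\<not> j < m"
    then have "f m \<le> f j" using mono by (simp add: strict_mono_less_eq)
    then show False using \<open>x < f m\<close> \<open>f j < x\<close> by simp
  qed
  then have "\<not> x < f (m - 1)"
    using Least_le[of "\<lambda>m. x < f m" "m - 1", folded m_def] by auto
  moreover have "f (m - 1) \<noteq> x" using \<open>x \<notin> range f\<close> by auto
  ultimately have "f (m - 1) < x" by linarith
  then show ?thesis using that \<open>j < m\<close> \<open>x < f m\<close> by blast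
qed

lemma greedy_extension_eq:
  fixes f :: "nat \<Rightarrow> nat"
  assumes mono: "strict_mono f" and free: "three_free (range f)"
    and greedy: "greedy_above f (f (m - 1))" and "0 < m"
  shows "(LEAST x. f (m - 1) < x \<and> three_free (insert x (f ` {..<m}))) = f m"
proof (rule Least_equality)
  show "f (m - 1) < f m \<and> three_free (insert (f m) (f ` {..<m}))"
    using mono \<open>0 < m\<close> by (auto simp: strict_mono_less intro: three_free_subset[OF free])
next
  fix y assume y: "f (m - 1) < y \<and> three_free (insert y (f ` {..<m}))"
  show "f m \<le> y"
  proof (rule ccontr)
    assume "\<not> f m \<le> y"
    have "y \<notin> range f"
    proof
      assume "y \<in> range f"
      then obtain j where "y = f j" by blast
      then have "m - 1 < j" "j < m"
        using y \<open>\<not> f m \<le> y\<close> by (auto simp: strict_mono_less[OF mono] not_le)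
      then show False by simp
    qed
    then obtain p q where pq: "p \<in> range f" "q \<in> range f" "p < q" "q < y" "p + y = 2 * q"
      using greedy_aboveD[OF greedy] y by metis
    have below: "z \<in> f ` {..<m}" if z: "z \<in> range f" "z < y" for z
    proof -
      obtain j where "z = f j" using z by blast
      moreover have "f j < f m" using z \<open>\<not> f m \<le> y\<close> \<open>z = f j\<close> by simp
      ultimately show ?thesis using mono by (simp add: strict_mono_less)
    qed
    have "p \<in> f ` {..<m}" "q \<in> f ` {..<m}" using below pq by auto
    then show False using three_free_insertD pq y by blast
  qed
qed

lemma stanley_eqI:
  fixes f :: "nat \<Rightarrow> nat"
  assumes "0 < card I" and mono: "strict_mono f"
    and init: "\<forall>i<card I. f i = sorted_list_of_set I ! i"
    and free: "three_free (range f)"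
    and greedy: "greedy_above f (f (card I - 1))"
  shows "stanley I = f"
proof -
  have "stanley_list I m = map f [0..<m]" for m
  proof (induction m)
    case (Suc m)
    show ?case
    proof (cases "m < card I")
      case True
      then show ?thesis using Suc init by (simp add: stanley_list_Suc)
    next
      case False
      then have "0 < m" using \<open>0 < card I\<close> by simp
      have "f (card I - 1) \<le> f (m - 1)" using False mono by (simp add: strict_mono_less_eq)
      then have "greedy_above f (f (m - 1))" using greedy greedy_above_mono by blast
      then show ?thesis
        using Suc False \<open>0 < m\<close> greedy_extension_eq[OF mono free]
        by (simp add: stanley_list_Suc last_map atLeast0LessThan)
    qed
  qed simp
  then show ?thesis
    by (auto simp: stanley_def simp del: upt_Suc)
qed

locale stanley_seed =
  fixes A :: "nat set"
  assumes finite_A: "finite A" and three_free_A: "three_free A" and A_nonempty: "A \<noteq> {}"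
begin

lemma card_pos: "0 < card A"
  using finite_A A_nonempty by (simp add: card_gt_0_iff)

lemma sorted_three_free_stanley_list:
  "sorted_wrt (<) (stanley_list A n) \<and> three_free (set (stanley_list A n))"
proof (induction n)
  case 0
  then show ?case by (simp add: three_free_def)
next
  case (Suc n)
  let ?xs = "stanley_list A n"
  show ?case
  proof (cases "n < card A")
    case True
    have "stanley_list A (Suc n) = take (Suc n) (sorted_list_of_set A)"
      using True
      by (intro nth_equalityI) (simp_all add: stanley_list_eq_map stanley_less_card del: upt_Suc)
    moreover have "set (take (Suc n) (sorted_list_of_set A)) \<subseteq> A"
      using finite_A by (metis set_take_subset sorted_list_of_set.set_sorted_key_list_of_set)
    ultimately show ?thesis
      using three_free_subset[OF three_free_A]
      by (metis sorted_list_of_set.strict_sorted_key_list_of_set sorted_wrt_take)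
  next
    case False
    then have "length ?xs \<noteq> 0" using card_pos by simp
    then have "?xs \<noteq> []" by (metis length_0_conv)
    define l where "l = last ?xs"
    obtain ys where ys: "?xs = ys @ [l]"
      using \<open>?xs \<noteq> []\<close> unfolding l_def by (metis append_butlast_last_id)
    then have "sorted_wrt (<) (ys @ [l])" using Suc.IH by simp
    then have le: "\<forall>s\<in>set ?xs. s \<le> l" using ys by (auto simp: sorted_wrt_append)
    define P where "P x \<longleftrightarrow> l < x \<and> three_free (insert x (set ?xs))" for x
    have "P (2 * l + 1)"
      unfolding P_def using Suc.IH le by (fastforce intro!: three_free_insert_greater)
    then have "P (LEAST x. P x)" by (rule LeastI)
    moreover have "stanley_list A (Suc n) = ?xs @ [LEAST x. P x]"
      using False by (simp add: stanley_list_Suc P_def l_def)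
    ultimately show ?thesis
      using Suc.IH le unfolding P_def by (auto simp: sorted_wrt_append)
  qed
qed

lemma strict_mono_stanley: "strict_mono (stanley A)"
  unfolding strict_mono_Suc_iff
proof
  fix n
  have "sorted_wrt (<) (stanley_list A (Suc (Suc n)))"
    using sorted_three_free_stanley_list by blast
  then show "stanley A n < stanley A (Suc n)"
    by (simp add: sorted_wrt_iff_nth_less stanley_list_eq_map del: upt_Suc)
qed

lemma three_free_range_stanley: "three_free (range (stanley A))"
  unfolding three_free_def
proof (intro ballI impI)
  fix x y z assume "x \<in> range (stanley A)" "y \<in> range (stanley A)" "z \<in> range (stanley A)"
    "x < y" "y < z"
  then obtain i j m where ijm: "x = stanley A i" "y = stanley A j" "z = stanley A m" by blast
  let ?n = "Suc (i + j + m)"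
  have "three_free (stanley A ` {..<?n})"
    using sorted_three_free_stanley_list[of ?n]
    by (simp add: stanley_list_eq_map atLeast0LessThan del: upt_Suc)
  moreover have "x \<in> stanley A ` {..<?n}" "y \<in> stanley A ` {..<?n}" "z \<in> stanley A ` {..<?n}"
    using ijm by auto
  ultimately show "x + z \<noteq> 2 * y" using \<open>x < y\<close> \<open>y < z\<close> unfolding three_free_def by blast
qed

lemma greedy_above_stanley: "greedy_above (stanley A) (stanley A (card A - 1))"
  unfolding greedy_above_def
proof (intro allI impI)
  let ?a = "stanley A"
  have mono: "strict_mono ?a" by (rule strict_mono_stanley)
  fix x assume x: "?a (card A - 1) < x" "x \<notin> range ?a"
  obtain m where m: "card A - 1 < m" "?a (m - 1) < x" "x < ?a m"
    by (rule strict_mono_between[OF mono x])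
  then have "card A \<le> m" "0 < m" by auto
  \<comment> \<open>the greedy choice of the m-th term skipped x\<close>
  have not_free: "\<not> three_free (insert x (?a ` {..<m}))"
    using stanley_ge_card[OF \<open>card A \<le> m\<close> \<open>0 < m\<close>] m(2,3) not_less_Least by fastforce
  have free: "three_free (?a ` {..<m})"
    by (rule three_free_subset[OF three_free_range_stanley]) auto
  have below: "\<forall>s\<in>?a ` {..<m}. s < x"
  proof
    fix s assume "s \<in> ?a ` {..<m}"
    then obtain i where "i < m" "s = ?a i" by blast
    then have "s \<le> ?a (m - 1)" using mono by (simp add: strict_mono_less_eq)
    then show "s < x" using m(2) by simp
  qed
  have "\<not> (\<forall>p\<in>?a ` {..<m}. \<forall>q\<in>?a ` {..<m}. p < q \<longrightarrow> p + x \<noteq> 2 * q)"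
    using three_free_insert_greater[OF free below] not_free by blast
  then obtain p q where "p \<in> ?a ` {..<m}" "q \<in> ?a ` {..<m}" "p < q" "p + x = 2 * q"
    by blast
  moreover have "q < x" using \<open>p + x = 2 * q\<close> \<open>p < q\<close> by simp
  ultimately show "\<exists>p q. p \<in> range ?a \<and> q \<in> range ?a \<and> p < q \<and> q < x \<and> p + x = 2 * q"
    by blast
qed

lemma image_stanley_card: "stanley A ` {..<card A} = A"
proof -
  have "map (stanley A) [0..<card A] = sorted_list_of_set A"
    by (intro nth_equalityI) (simp_all add: stanley_less_card)
  then have "set (map (stanley A) [0..<card A]) = A" using finite_A by simp
  then show ?thesis by (simp add: atLeast0LessThan)
qed

end

lemma stanley_0:
  assumes "finite A" "0 \<in> A"
  shows "stanley A 0 = 0"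
proof -
  have "Min A = 0" using assms by (intro Min_eqI) auto
  then show ?thesis
    using assms stanley_less_card[of 0 A] sorted_list_of_set_nonempty[of A]
    by (auto simp: card_gt_0_iff)
qed

text \<open>A minimal nucleating set misses a_{2^l}, so it consists of at most the first 2^l terms,
  and the sequence is greedy beyond them.\<close>
lemma greedy_above_adequate:
  assumes "stanley_init A" "adequate A lam l"
  shows "greedy_above (stanley A) (stanley A (2^l - 1))"
proof -
  have "nucleating_set A A" unfolding nucleating_set_def using assms(1) by simp
  then obtain B where B: "nucleating_set A B" "\<forall>B'. nucleating_set A B' \<longrightarrow> card B \<le> card B'"
    using ex_has_least_nat[of "nucleating_set A" A card] by blast
  then have "minimal_nucleating_set A B" unfolding minimal_nucleating_set_def by blast
  then have notin: "stanley A (2^l) \<notin> B" using assms(2) unfolding adequate_def by blast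
  have B_init: "finite B" "three_free B" "B \<noteq> {}" and B_eq: "stanley B = stanley A"
    using B(1) unfolding nucleating_set_def stanley_init_def by auto
  interpret B: stanley_seed B using B_init by unfold_locales
  have "card B \<le> 2^l"
  proof (rule ccontr)
    assume "\<not> card B \<le> 2^l"
    then have "stanley A (2^l) \<in> stanley B ` {..<card B}" using B_eq by auto
    then show False using B.image_stanley_card notin by simp
  qed
  then have "stanley A (card B - 1) \<le> stanley A (2^l - 1)"
    using B.strict_mono_stanley B_eq by (simp add: strict_mono_less_eq)
  moreover have "greedy_above (stanley A) (stanley A (card B - 1))"
    using B.greedy_above_stanley B_eq by simp
  ultimately show ?thesis using greedy_above_mono by blast
qed

section \<open>Sequences satisfying the doubling equations\<close>

text \<open>The properties of an independent Stanley sequence a of character lam, with adequate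
  integer l, that the construction uses.\<close>
locale doubling_sequence =
  fixes a :: "nat \<Rightarrow> nat" and lam :: int and l :: nat
  assumes strict_mono: "strict_mono a"
    and a_0: "a 0 = 0"
    and three_free_range: "three_free (range a)"
    and greedy: "greedy_above a (a (2^l - 1))"
    and doubling: "\<And>J. l \<le> J \<Longrightarrow> indep_eqs a lam J"
begin

text \<open>Terms are taken as integers, so that reflections 2 u - v are total. seg J holds the
  first 2^J terms, seg_max J = a_{2^J - 1} and seg_next J = a_{2^J}.\<close>
definition terms :: "int set" where "terms = range (\<lambda>i. int (a i))"
definition seg :: "nat \<Rightarrow> int set" where "seg J = (\<lambda>i. int (a i)) ` {..<2^J}"
definition seg_max :: "nat \<Rightarrow> int" where "seg_max J = int (a (2^J - 1))"
definition seg_next :: "nat \<Rightarrow> int" where "seg_next J = int (a (2^J))"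

definition seg_reflect :: "nat \<Rightarrow> int set" where
  "seg_reflect J = {2 * u - v | u v. u \<in> seg J \<and> v \<in> seg J}"

lemma a_less_iff [simp]: "a i < a j \<longleftrightarrow> i < j"
  using strict_mono by (simp add: strict_mono_less)

lemma a_le_iff [simp]: "a i \<le> a j \<longleftrightarrow> i \<le> j"
  using strict_mono by (simp add: strict_mono_less_eq)

lemma terms_no_ap:
  assumes "x \<in> terms" "y \<in> terms" "z \<in> terms" "x + z = 2 * y"
  shows "x = z"
proof (rule ccontr)
  obtain i j m where ijm: "x = int (a i)" "y = int (a j)" "z = int (a m)"
    using assms unfolding terms_def by blast
  then have sum: "a i + a m = 2 * a j" using assms(4) by linarith
  assume "x \<noteq> z"
  then consider "a i < a j" "a j < a m" | "a m < a j" "a j < a i" using sum ijm by linarith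
  then show False
  proof cases
    case 1
    then show False using three_free_range sum unfolding three_free_def by blast
  next
    case 2
    moreover have "a m + a i = 2 * a j" using sum by simp
    ultimately show False using three_free_range unfolding three_free_def by blast
  qed
qed

lemma a_block_shift: "l \<le> J \<Longrightarrow> i < 2^J \<Longrightarrow> a (2^J + i) = a (2^J) + a i"
  using doubling[of J] unfolding indep_eqs_def by simp

lemma seg_next_eq: "l \<le> J \<Longrightarrow> seg_next J = 2 * seg_max J + 1 - lam"
  using doubling[of J] unfolding indep_eqs_def seg_next_def seg_max_def by simp

lemma seg_max_Suc: "l \<le> J \<Longrightarrow> seg_max (Suc J) = seg_next J + seg_max J"
  using a_block_shift[of J "2^J - 1"] unfolding seg_max_def seg_next_def
  by (simp add: mult_2)

lemma seg_next_Suc: "l \<le> J \<Longrightarrow> seg_next (Suc J) = 3 * seg_next J"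
  using seg_next_eq[of J] seg_next_eq[of "Suc J"] seg_max_Suc[of J] by simp

lemma seg_Suc: "l \<le> J \<Longrightarrow> seg (Suc J) = seg J \<union> (+) (seg_next J) ` seg J"
  unfolding seg_def seg_next_def lessThan_pow2_Suc
  by (auto simp: a_block_shift image_Un image_image)

lemma seg_SucE:
  assumes "l \<le> J" "x \<in> seg (Suc J)"
  obtains "x \<in> seg J" | t where "t \<in> seg J" "x = seg_next J + t"
  using assms seg_Suc by blast

lemma seg_Suc_upper: "l \<le> J \<Longrightarrow> t \<in> seg J \<Longrightarrow> seg_next J + t \<in> seg (Suc J)"
  using seg_Suc by blast

lemma seg_mono: "J \<le> J' \<Longrightarrow> seg J \<subseteq> seg J'"
proof -
  assume "J \<le> J'"
  then have "(2::nat)^J \<le> 2^J'" by (simp add: power_increasing)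
  then show ?thesis unfolding seg_def by (intro image_mono) auto
qed

lemma seg_Suc_lower: "x \<in> seg J \<Longrightarrow> x \<in> seg (Suc J)"
  using seg_mono[of J "Suc J"] by auto

lemma seg_nonneg: "x \<in> seg J \<Longrightarrow> 0 \<le> x"
  unfolding seg_def by auto

lemma seg_le_max: "x \<in> seg J \<Longrightarrow> x \<le> seg_max J"
  unfolding seg_def seg_max_def by auto

lemma seg_max_less_next: "seg_max J < seg_next J"
  unfolding seg_max_def seg_next_def by simp

lemma seg_max_mono: "J \<le> J' \<Longrightarrow> seg_max J \<le> seg_max J'"
  unfolding seg_max_def by (simp add: diff_le_mono power_increasing)

lemma seg_next_mono: "J \<le> J' \<Longrightarrow> seg_next J \<le> seg_next J'"
  unfolding seg_next_def by (simp add: power_increasing)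

lemma seg_subset_terms: "seg J \<subseteq> terms"
  unfolding seg_def terms_def by auto

lemma terms_less_next: "x \<in> terms \<Longrightarrow> x < seg_next J \<Longrightarrow> x \<in> seg J"
  unfolding terms_def seg_def seg_next_def by auto

lemma reflect_of_nonterm:
  assumes "seg_max l < x" "x < seg_next J" "x \<notin> terms"
  shows "\<exists>u\<in>seg J. \<exists>v\<in>seg J. v < u \<and> x = 2 * u - v"
proof -
  have "0 \<le> x" using assms(1) unfolding seg_max_def by linarith
  then have "a (2^l - 1) < nat x" using assms(1) unfolding seg_max_def by linarith
  moreover have "nat x \<notin> range a"
  proof
    assume "nat x \<in> range a"
    then obtain i where "nat x = a i" by blast
    then have "x = int (a i)" using \<open>0 \<le> x\<close> by linarith
    then show False using assms(3) unfolding terms_def by blast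
  qed
  ultimately obtain p q where "p \<in> range a" "q \<in> range a" "p < q" "q < nat x" "p + nat x = 2 * q"
    using greedy_aboveD[OF greedy] by metis
  with \<open>0 \<le> x\<close> have "int q \<in> terms" "int p \<in> terms" "int p < int q" "int q < x"
    "x = 2 * int q - int p"
    unfolding terms_def by auto
  moreover have "int q \<in> seg J" "int p \<in> seg J"
    using terms_less_next \<open>int q < x\<close> \<open>int p < int q\<close> assms(2) \<open>int q \<in> terms\<close> \<open>int p \<in> terms\<close>
    by simp_all
  ultimately show ?thesis by blast
qed

lemma seg_gap:
  assumes "l \<le> J" "seg_max J < x" "x < seg_next J"
  shows "\<exists>u\<in>seg J. \<exists>v\<in>seg J. v < u \<and> x = 2 * u - v"
proof (rule reflect_of_nonterm)
  show "seg_max l < x" using seg_max_mono[OF assms(1)] assms(2) by simp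
  show "x \<notin> terms" using terms_less_next seg_le_max assms(2,3) by fastforce
qed fact

text \<open>If lam were negative, 2 a_{2^l - 1} + 1 would lie in the gap below a_{2^l} without
  being a reflection.\<close>
lemma lam_nonneg: "0 \<le> lam"
proof (rule ccontr)
  assume "\<not> 0 \<le> lam"
  then have "seg_max l < 2 * seg_max l + 1" "2 * seg_max l + 1 < seg_next l"
    using seg_next_eq[of l] unfolding seg_max_def by simp_all
  then obtain u v where "u \<in> seg l" "v \<in> seg l" "2 * seg_max l + 1 = 2 * u - v"
    using seg_gap by blast
  then show False using seg_le_max[of u l] seg_nonneg[of v l] by linarith
qed

lemma lam_le_seg_max: "l \<le> J \<Longrightarrow> lam \<le> seg_max J"
  using seg_next_eq[of l] seg_max_less_next[of l] seg_max_mono[of l J] by simp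

lemma lam_less_seg_next: "l \<le> J \<Longrightarrow> lam < seg_next J"
  using lam_le_seg_max[of J] seg_max_less_next[of J] by linarith

lemma seg_reflectI: "u \<in> seg J \<Longrightarrow> v \<in> seg J \<Longrightarrow> z = 2 * u - v \<Longrightarrow> z \<in> seg_reflect J"
  unfolding seg_reflect_def by blast

lemma seg_reflectE:
  assumes "z \<in> seg_reflect J"
  obtains u v where "u \<in> seg J" "v \<in> seg J" "z = 2 * u - v"
  using assms unfolding seg_reflect_def by blast

lemma double_next_reflect:
  assumes J: "l \<le> J" and z: "0 \<le> z" "z < seg_next J"
  obtains u v where "u \<in> seg J" "v \<in> seg J" "2 * seg_next J + z = 2 * (seg_next J + u) - v"
  | u v where "u \<in> seg J" "v \<in> seg J"
      "2 * seg_next J + z = 2 * (seg_next J + u) - (seg_next J + v)"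
proof -
  have "seg_max (Suc J) < 2 * seg_next J + z" "2 * seg_next J + z < seg_next (Suc J)"
    using seg_max_Suc[OF J] seg_max_less_next[of J] seg_next_Suc[OF J] z by linarith+
  then obtain u v where uv: "u \<in> seg (Suc J)" "v \<in> seg (Suc J)" "2 * seg_next J + z = 2 * u - v"
    using seg_gap[of "Suc J" "2 * seg_next J + z"] J by auto
  \<comment> \<open>u cannot lie in the lower half, since 2 seg_max J = seg_next J + lam - 1 < 2 seg_next J.\<close>
  have "u \<notin> seg J"
  proof
    assume "u \<in> seg J"
    then show False
      using uv seg_le_max[of u J] seg_nonneg[of v "Suc J"] seg_next_eq[OF J]
        lam_less_seg_next[OF J] z by linarith
  qed
  then obtain u' where "u' \<in> seg J" "u = seg_next J + u'" using seg_SucE[OF J uv(1)] by metis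
  show ?thesis
  proof (cases rule: seg_SucE[OF J uv(2)])
    case 1
    then show ?thesis using that(1)[of u' v] \<open>u = seg_next J + u'\<close> \<open>u' \<in> seg J\<close> uv by simp
  next
    case (2 t)
    then show ?thesis using that(2)[of u' t] \<open>u = seg_next J + u'\<close> \<open>u' \<in> seg J\<close> uv by simp
  qed
qed

lemma seg_reflect_ge_lam:
  assumes J: "l \<le> J" and z: "lam \<le> z" "z < seg_next J"
  shows "z \<in> seg_reflect J"
proof -
  have "0 \<le> z" using lam_nonneg z by linarith
  then show ?thesis
  proof (cases rule: double_next_reflect[OF J \<open>0 \<le> z\<close> z(2)])
    case (1 u v)
    then show ?thesis by (intro seg_reflectI[of u J v]) simp_all
  next
    case (2 u v)
    then have "2 * u - v = seg_next J + z" by (simp add: algebra_simps)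
    then have False
      using seg_le_max[OF 2(1)] seg_nonneg[OF 2(2)] seg_next_eq[OF J] z by linarith
    then show ?thesis ..
  qed
qed

lemma seg_reflect_Suc:
  assumes J: "l \<le> J" and z: "0 \<le> z" "z < seg_next J"
  shows "z \<in> seg_reflect (Suc J)"
proof (cases rule: double_next_reflect[OF J z])
  case (1 u v)
  then show ?thesis by (intro seg_reflectI[of u "Suc J" v]) (simp_all add: seg_Suc_lower)
next
  case (2 u v)
  then show ?thesis
    by (intro seg_reflectI[of u "Suc J" "seg_next J + v"])
      (simp_all add: seg_Suc_lower seg_Suc_upper[OF J])
qed

lemma seg_reflect_nonneg:
  assumes "l < J" "0 \<le> z" "z < seg_next J"
  shows "z \<in> seg_reflect J"
proof (cases "lam \<le> z")
  case True
  then show ?thesis using seg_reflect_ge_lam[of J z] assms by simp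
next
  case False
  obtain J' where J': "J = Suc J'" "l \<le> J'" using assms(1) by (cases J) auto
  have "z < seg_next J'" using False lam_less_seg_next[OF J'(2)] by simp
  then show ?thesis using seg_reflect_Suc[OF J'(2)] J' assms(2) by simp
qed

lemma seg_reflect_neg:
  assumes "l < J" "seg_max l + lam - seg_max J \<le> z" "z < seg_next J"
  shows "z \<in> seg_reflect J"
  using assms
proof (induction J arbitrary: z)
  case (Suc J)
  show ?case
  proof (cases "0 \<le> z")
    case True
    then show ?thesis using seg_reflect_nonneg Suc.prems by simp
  next
    case False
    have J: "l \<le> J" using Suc.prems by simp
    have "seg_max l + lam - seg_max J \<le> z + seg_next J"
      using Suc.prems(2) seg_max_Suc[OF J] by simp
    have "z + seg_next J \<in> seg_reflect J"
    proof (cases "l = J")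
      case True
      then show ?thesis
        using seg_reflect_ge_lam[OF J] \<open>seg_max l + lam - seg_max J \<le> z + seg_next J\<close> False
        by simp
    next
      case False
      then show ?thesis
        using Suc.IH J \<open>seg_max l + lam - seg_max J \<le> z + seg_next J\<close> \<open>\<not> 0 \<le> z\<close>
        by simp
    qed
    then obtain u v where "u \<in> seg J" "v \<in> seg J" "z + seg_next J = 2 * u - v"
      by (rule seg_reflectE)
    then show ?thesis
      by (intro seg_reflectI[of u "Suc J" "seg_next J + v"])
        (simp_all add: seg_Suc_lower seg_Suc_upper[OF J])
  qed
qed simp

lemma a_pow2_diff: "l \<le> K \<Longrightarrow> int (a (2^K - 2^l)) = seg_max K - seg_max l"
proof (induction K rule: dec_induct)
  case base
  then show ?case using a_0 by simp
next
  case (step K)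
  have "(2::nat)^Suc K - 2^l = 2^K + (2^K - 2^l)" "(2::nat)^K - 2^l < 2^K"
    using power_increasing[of l K "2::nat"] step.hyps by simp_all
  then have "a (2^Suc K - 2^l) = a (2^K) + a (2^K - 2^l)"
    using a_block_shift[OF step.hyps(1)] by simp
  then show ?case using step.IH seg_max_Suc[OF step.hyps(1)] unfolding seg_next_def by simp
qed

lemma next_plus_not_term:
  assumes J: "l \<le> J" and t: "0 < t" "t < seg_next (Suc J)" "t \<notin> seg (Suc J)"
  shows "seg_next (Suc J) + t \<notin> terms"
proof
  have J1: "l \<le> Suc J" using J by simp
  assume "seg_next (Suc J) + t \<in> terms"
  moreover have "seg_next (Suc J) + t < seg_next (Suc (Suc J))"
    using seg_next_Suc[OF J1] t(1,2) by linarith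
  ultimately have "seg_next (Suc J) + t \<in> seg (Suc (Suc J))" using terms_less_next by blast
  moreover have "seg_next (Suc J) + t \<notin> seg (Suc J)"
    using seg_le_max seg_max_less_next[of "Suc J"] t(1) by fastforce
  ultimately show False using seg_Suc[OF J1] t(3) by auto
qed

lemma next_plus_reflect_lower:
  assumes J: "l \<le> J" and "0 < t" and u: "u \<in> seg (Suc J)" and v: "v \<in> seg (Suc (Suc J))"
    and eq: "seg_next (Suc J) + t = 2 * u - v"
  shows "\<exists>p\<in>seg J. \<exists>v\<in>terms. v < lam \<and> seg_next (Suc J) + t = 2 * (seg_next J + p) - v"
proof -
  let ?M = "seg_max (Suc J)"
  have v_eq: "v = lam - 1 - t - 2 * ?M + 2 * u" using eq seg_next_eq[of "Suc J"] J by simp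
  moreover have "0 \<le> v" using seg_nonneg v by blast
  moreover have "u \<le> ?M" using seg_le_max u by blast
  ultimately have "seg_max J < u"
    using seg_max_Suc[OF J] lam_le_seg_max[OF J] seg_max_less_next[of J] \<open>0 < t\<close> lam_nonneg
    by linarith
  then have "u \<notin> seg J" using seg_le_max by fastforce
  then obtain p where p: "p \<in> seg J" "u = seg_next J + p" using seg_SucE[OF J u] by metis
  have "v \<in> terms" using v seg_subset_terms by blast
  moreover have "v < lam" using v_eq \<open>0 < t\<close> \<open>u \<le> ?M\<close> by linarith
  moreover have "seg_next (Suc J) + t = 2 * (seg_next J + p) - v" using p(2) eq by simp
  ultimately show ?thesis using p(1) by blast
qed

lemma next_plus_reflect:
  assumes J: "l \<le> J" and t: "0 < t" "t \<le> seg_max l" "t \<notin> seg (Suc J)"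
  shows "(\<exists>u\<in>seg (Suc J). \<exists>v\<in>seg (Suc J). v < u \<and> t = 2 * u - v) \<or>
         (\<exists>p\<in>seg J. \<exists>v\<in>terms. v < lam \<and> seg_next (Suc J) + t = 2 * (seg_next J + p) - v)"
proof -
  let ?N = "seg_next (Suc J)" and ?M = "seg_max (Suc J)"
  have J1: "l \<le> Suc J" using J by simp
  have "seg_max (Suc l) \<le> ?M" using seg_max_mono J by simp
  then have big: "seg_max l + lam < ?M"
    using seg_max_Suc[of l] lam_less_seg_next[of l] by simp
  have N: "?N = 2 * ?M + 1 - lam" by (rule seg_next_eq[OF J1])
  have "t < ?N" using seg_max_less_next[of "Suc J"] t big lam_nonneg by linarith
  then have "?N + t < seg_next (Suc (Suc J))" "?N + t \<notin> terms"
    using seg_next_Suc[OF J1] t(1) next_plus_not_term[OF J t(1) _ t(3)] by simp_all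
  moreover have "seg_max l < ?N + t" using big N t lam_nonneg by simp
  ultimately obtain u' v' where uv: "u' \<in> seg (Suc (Suc J))" "v' \<in> seg (Suc (Suc J))" "v' < u'"
    "?N + t = 2 * u' - v'"
    using reflect_of_nonterm by blast
  show ?thesis
  proof (cases rule: seg_SucE[OF J1 uv(1)])
    case 1
    then show ?thesis using next_plus_reflect_lower[OF J t(1) 1 uv(2,4)] by blast
  next
    case (2 u)
    show ?thesis
    proof (cases rule: seg_SucE[OF J1 uv(2)])
      case 1
      then have "v' \<le> ?M" by (rule seg_le_max)
      moreover have "v' = ?N + 2 * u - t" using uv(4) 2 by simp
      ultimately have False using seg_nonneg[OF \<open>u \<in> seg (Suc J)\<close>] t(2) big N by linarith
      then show ?thesis ..
    next
      case (2 v)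
      then have "t = 2 * u - v" "v < u" using uv(3,4) \<open>u' = ?N + u\<close> by simp_all
      then show ?thesis using \<open>u \<in> seg (Suc J)\<close> \<open>v \<in> seg (Suc J)\<close> by blast
    qed
  qed
qed

lemma top_block_reflect:
  assumes J: "l \<le> J" and t: "0 < t" "t \<le> seg_max (Suc J)" "t \<notin> seg (Suc J)"
  shows "(\<exists>u\<in>seg (Suc J). \<exists>v\<in>seg (Suc J). v < u \<and> t = 2 * u - v) \<or>
         (\<exists>p\<in>seg J. \<exists>v\<in>terms. v < lam \<and> seg_next (Suc J) + t = 2 * (seg_next J + p) - v)"
proof (cases "seg_max l < t")
  case True
  have "t < seg_next (Suc J)" using t(2) seg_max_less_next by (rule order.strict_trans1)
  moreover have "t \<notin> terms" using terms_less_next calculation t(3) by blast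
  ultimately show ?thesis using reflect_of_nonterm True by blast
next
  case False
  then show ?thesis using next_plus_reflect[OF J t(1) _ t(3)] by simp
qed

end

section \<open>The sequence S_k(c, A)\<close>

locale shifted_sequence = doubling_sequence +
  fixes k :: nat and c :: int
  assumes l_le_k: "l \<le> k" and lam_le_c: "lam \<le> c" and c_le: "c \<le> int (a (2^k - 2^l)) - lam"
begin

definition shift :: "nat \<Rightarrow> int" where "shift J = 2^(J - k) * c"
definition b :: "nat \<Rightarrow> int" where
  "b i = int (a i) + (if i < 2^k then 0 else shift (dyadic_block i))"
definition bseg :: "nat \<Rightarrow> int set" where "bseg J = b ` {..<2^J}"
definition bseg_max :: "nat \<Rightarrow> int" where "bseg_max J = b (2^J - 1)"
definition bseg_next :: "nat \<Rightarrow> int" where "bseg_next J = seg_next J + shift J"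

lemma c_nonneg: "0 \<le> c"
  using lam_nonneg lam_le_c by simp

lemma c_le_seg_max: "c \<le> seg_max k - seg_max l - lam"
  using c_le a_pow2_diff[OF l_le_k] by simp

lemma c_less_seg_next: "c < seg_next k"
proof -
  have "0 \<le> seg_max l" unfolding seg_max_def by simp
  then show ?thesis using c_le_seg_max lam_nonneg seg_max_less_next[of k] by linarith
qed

lemma seg_reflect_ge_neg_c:
  assumes J: "k \<le> J" and z: "- c \<le> z" "z < seg_next J"
  shows "z \<in> seg_reflect J"
proof (cases "l < J")
  case True
  have "seg_max k \<le> seg_max J" using seg_max_mono[OF J] .
  then have "seg_max l + lam - seg_max J \<le> z" using c_le_seg_max z(1) by linarith
  then show ?thesis using seg_reflect_neg[OF True _ z(2)] by blast
next
  case False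
  \<comment> \<open>then J = k = l, and the bounds on c force c = lam = 0\<close>
  then have "J = l" "k = l" using J l_le_k by simp_all
  then have "c \<le> - lam" using c_le_seg_max by simp
  then have "lam \<le> z" using lam_le_c lam_nonneg z(1) by linarith
  then show ?thesis using seg_reflect_ge_lam[of J z] \<open>J = l\<close> z(2) by simp
qed

lemma shift_k [simp]: "shift k = c"
  unfolding shift_def by simp

lemma shift_Suc: "k \<le> J \<Longrightarrow> shift (Suc J) = 2 * shift J"
  unfolding shift_def by (simp add: Suc_diff_le)

lemma shift_ge_c: "k \<le> J \<Longrightarrow> c \<le> shift J"
  unfolding shift_def using c_nonneg by (simp add: mult_le_cancel_right1)

lemma shift_le_seg_next: "k \<le> J \<Longrightarrow> shift J \<le> seg_next J"
proof (induction J rule: dec_induct)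
  case base
  then show ?case using c_less_seg_next by simp
next
  case (step J)
  have "l \<le> J" "0 \<le> seg_next J" using step.hyps l_le_k by (simp_all add: seg_next_def)
  then show ?case using step.IH shift_Suc[OF step.hyps(1)] seg_next_Suc by simp
qed

lemma b_low: "i < 2^k \<Longrightarrow> b i = int (a i)"
  unfolding b_def by simp

lemma b_high:
  assumes J: "k \<le> J" and i: "i < 2^J"
  shows "b (2^J + i) = bseg_next J + int (a i)"
proof -
  have "dyadic_block (2^J + i) = J" using i by (intro dyadic_block_eqI) auto
  moreover have "\<not> 2^J + i < (2::nat)^k"
    using power_increasing[OF J, of "2::nat"] by linarith
  moreover have "a (2^J + i) = a (2^J) + a i" using a_block_shift J l_le_k i by simp
  ultimately show ?thesis unfolding b_def bseg_next_def seg_next_def by simp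
qed

lemma b_pow2: "k \<le> J \<Longrightarrow> b (2^J) = bseg_next J"
  using b_high[of J 0] a_0 by simp

lemma bseg_k: "bseg k = seg k"
  unfolding bseg_def seg_def using b_low by auto

lemma bseg_Suc: "k \<le> J \<Longrightarrow> bseg (Suc J) = bseg J \<union> (+) (bseg_next J) ` seg J"
  unfolding bseg_def seg_def lessThan_pow2_Suc by (auto simp: b_high image_Un image_image)

lemma bseg_SucE:
  assumes "k \<le> J" "x \<in> bseg (Suc J)"
  obtains "x \<in> bseg J" | t where "t \<in> seg J" "x = bseg_next J + t"
  using assms bseg_Suc by blast

lemma bseg_Suc_upper: "k \<le> J \<Longrightarrow> t \<in> seg J \<Longrightarrow> bseg_next J + t \<in> bseg (Suc J)"
  using bseg_Suc by blast

lemma bseg_max_k: "bseg_max k = seg_max k"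
  unfolding bseg_max_def seg_max_def using b_low by simp

lemma bseg_max_Suc: "k \<le> J \<Longrightarrow> bseg_max (Suc J) = bseg_next J + seg_max J"
  using b_high[of J "2^J - 1"] unfolding bseg_max_def seg_max_def by (simp add: mult_2)

lemma bseg_next_ge: "k \<le> J \<Longrightarrow> seg_next J + c \<le> bseg_next J"
  unfolding bseg_next_def using shift_ge_c by simp

lemma bseg_next_nonneg: "k \<le> J \<Longrightarrow> 0 \<le> bseg_next J"
  using bseg_next_ge[of J] c_nonneg seg_next_def by fastforce

lemma bseg_next_Suc_add:
  assumes "k \<le> J" shows "bseg_next (Suc J) = 2 * bseg_next J + seg_next J"
  using shift_Suc[OF assms] seg_next_Suc[of J] assms l_le_k unfolding bseg_next_def by simp

lemma bseg_next_Suc: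
  assumes "k \<le> J" shows "bseg_next (Suc J) = 2 * bseg_max (Suc J) + 1 - lam"
  using bseg_next_Suc_add[OF assms] bseg_max_Suc[OF assms] seg_next_eq[of J] assms l_le_k by simp

lemma bseg_max_Suc_shift:
  assumes "k \<le> J" shows "bseg_max (Suc J) = seg_max (Suc J) + shift J"
  using bseg_max_Suc[OF assms] seg_max_Suc[of J] assms l_le_k unfolding bseg_next_def by simp

lemma bseg_max_less_next: "k \<le> J \<Longrightarrow> bseg_max J < bseg_next J"
proof (induction J rule: dec_induct)
  case base
  then show ?case using bseg_max_k bseg_next_ge[of k] seg_max_less_next[of k] c_nonneg by simp
next
  case (step J)
  have "lam \<le> seg_max (Suc J)" using lam_le_seg_max step.hyps l_le_k by simp
  then show ?case
    using bseg_next_Suc[OF step.hyps(1)] bseg_max_Suc_shift[OF step.hyps(1)] shift_ge_c[OF step.hyps(1)]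
      c_nonneg by simp
qed

lemma bseg_bounds: "k \<le> J \<Longrightarrow> x \<in> bseg J \<Longrightarrow> 0 \<le> x \<and> x \<le> bseg_max J"
proof (induction J arbitrary: x rule: dec_induct)
  case base
  then show ?case using bseg_k bseg_max_k seg_nonneg seg_le_max by auto
next
  case (step J)
  have max: "bseg_max (Suc J) = bseg_next J + seg_max J" by (rule bseg_max_Suc[OF step.hyps(1)])
  have "0 \<le> seg_max J" unfolding seg_max_def by simp
  show ?case
  proof (cases rule: bseg_SucE[OF step.hyps(1) step.prems])
    case 1
    then show ?thesis
      using step.IH bseg_max_less_next[OF step.hyps(1)] max \<open>0 \<le> seg_max J\<close> by fastforce
  next
    case (2 t)
    then show ?thesis
      using bseg_next_nonneg[OF step.hyps(1)] seg_nonneg[of t J] seg_le_max[of t J] max by simp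
  qed
qed

lemma bseg_mono: "J \<le> J' \<Longrightarrow> bseg J \<subseteq> bseg J'"
proof -
  assume "J \<le> J'"
  then have "(2::nat)^J \<le> 2^J'" by (simp add: power_increasing)
  then show ?thesis unfolding bseg_def by (intro image_mono) auto
qed

lemma bseg_subset_range: "bseg J \<subseteq> range b"
  unfolding bseg_def by auto

lemma seg_k_subset_bseg: "k \<le> J \<Longrightarrow> seg k \<subseteq> bseg J"
  using bseg_mono bseg_k by blast

lemma bseg_low: "k \<le> J \<Longrightarrow> x \<in> bseg J \<Longrightarrow> x < seg_next k \<Longrightarrow> x \<in> seg k"
proof (induction J rule: dec_induct)
  case base
  then show ?case using bseg_k by simp
next
  case (step J)
  have "seg_next k \<le> bseg_next J"
    using bseg_next_ge[OF step.hyps(1)] seg_next_mono[OF step.hyps(1)] c_nonneg by simp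
  then show ?case
    using step seg_nonneg by (cases rule: bseg_SucE[OF step.hyps(1) step.prems(1)]) force+
qed

lemma bseg_top:
  assumes "k \<le> J" "y \<in> bseg (Suc J)" "bseg_max J < y"
  shows "y - bseg_next J \<in> seg J"
  using assms bseg_bounds[OF assms(1)] by (cases rule: bseg_SucE[OF assms(1,2)]) force+

lemma above_k_cases:
  assumes "k \<le> J"
  obtains "J = k" | J' where "J = Suc J'" "k \<le> J'"
  using assms by (cases J) (auto simp: le_Suc_eq)

lemma bseg_shift_reflect_k:
  assumes "0 \<le> z" "z < bseg_next k"
  shows "\<exists>u\<in>seg k. \<exists>w\<in>bseg k. z = shift k + 2 * u - w"
proof -
  have "z - c \<in> seg_reflect k"
    using assms seg_reflect_ge_neg_c[of k "z - c"] unfolding bseg_next_def by simp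
  then obtain u v where "u \<in> seg k" "v \<in> seg k" "z - c = 2 * u - v" by (rule seg_reflectE)
  then show ?thesis using bseg_k by force
qed

lemma bseg_shift_reflect_Suc:
  assumes J: "k \<le> J"
    and IH: "\<And>z. 0 \<le> z \<Longrightarrow> z < bseg_next J \<Longrightarrow> \<exists>u\<in>seg J. \<exists>w\<in>bseg J. z = shift J + 2 * u - w"
    and z: "0 \<le> z" "z < bseg_next (Suc J)"
  shows "\<exists>u\<in>seg (Suc J). \<exists>w\<in>bseg (Suc J). z = shift (Suc J) + 2 * u - w"
proof -
  let ?s = "shift J" and ?N = "seg_next J" and ?D = "bseg_next J"
  have lJ: "l \<le> J" using J l_le_k by simp
  have D: "?D = ?N + ?s" unfolding bseg_next_def ..
  have s: "0 \<le> ?s" "?s \<le> ?N" using shift_ge_c[OF J] c_nonneg shift_le_seg_next[OF J] by simp_all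
  have s_Suc: "shift (Suc J) = 2 * ?s" by (rule shift_Suc[OF J])
  have bseg_J: "bseg J \<subseteq> bseg (Suc J)" by (rule bseg_mono) simp
  \<comment> \<open>bseg_next (Suc J) = 2 ?N + 2 ?s + ?N splits into four ranges for z\<close>
  consider "z < ?s" | "?s \<le> z" "z < ?s + ?D" | "?s + ?D \<le> z" "z < 2 * ?N + ?s"
    | "2 * ?N + ?s \<le> z" by linarith
  then show ?thesis
  proof cases
    case 1
    then have "z + ?N - ?s \<in> seg_reflect J" using seg_reflect_ge_neg_c[OF J] z(1) s c_nonneg by simp
    then obtain u v where "u \<in> seg J" "v \<in> seg J" "z + ?N - ?s = 2 * u - v" by (rule seg_reflectE)
    then show ?thesis
      using seg_Suc_lower bseg_Suc_upper[OF J] s_Suc D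
      by (intro bexI[of _ u] bexI[of _ "?D + v"]) auto
  next
    case 2
    then obtain u w where "u \<in> seg J" "w \<in> bseg J" "z - ?s = ?s + 2 * u - w"
      using IH[of "z - ?s"] by auto
    then show ?thesis using seg_Suc_lower bseg_J s_Suc by (intro bexI[of _ u] bexI[of _ w]) auto
  next
    case 3
    then have "z - ?s - ?N \<in> seg_reflect J" using seg_reflect_ge_neg_c[OF J] s c_nonneg D by simp
    then obtain u v where "u \<in> seg J" "v \<in> seg J" "z - ?s - ?N = 2 * u - v" by (rule seg_reflectE)
    then show ?thesis
      using seg_Suc_upper[OF lJ] bseg_Suc_upper[OF J] s_Suc D
      by (intro bexI[of _ "?N + u"] bexI[of _ "?D + v"]) auto
  next
    case 4
    then obtain u w where "u \<in> seg J" "w \<in> bseg J" "z - 2 * ?N - ?s = ?s + 2 * u - w"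
      using IH[of "z - 2 * ?N - ?s"] z(2) bseg_next_Suc_add[OF J] D s by auto
    then show ?thesis
      using seg_Suc_upper[OF lJ] bseg_J s_Suc by (intro bexI[of _ "?N + u"] bexI[of _ w]) auto
  qed
qed

lemma bseg_shift_reflect:
  "k \<le> J \<Longrightarrow> 0 \<le> z \<Longrightarrow> z < bseg_next J \<Longrightarrow> \<exists>u\<in>seg J. \<exists>w\<in>bseg J. z = shift J + 2 * u - w"
proof (induction J arbitrary: z rule: dec_induct)
  case base
  then show ?case by (rule bseg_shift_reflect_k)
next
  case (step J)
  then show ?case using bseg_shift_reflect_Suc by blast
qed

lemma bseg_max_add_seg_max_less_next: "k \<le> J \<Longrightarrow> bseg_max J + seg_max J < bseg_next J"
proof (induction J rule: dec_induct)
  case base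
  then show ?case
    using bseg_max_k bseg_next_ge[of k] seg_next_eq[OF l_le_k] lam_le_c by simp
next
  case (step J)
  then show ?case
    using bseg_next_Suc[OF step.hyps(1)] bseg_max_Suc_shift[OF step.hyps(1)] shift_ge_c[OF step.hyps(1)]
      lam_le_c by simp
qed

lemma no_ap_low_low_top:
  assumes J: "k \<le> J" and x: "x \<in> bseg J" and y: "y \<in> bseg J" and t: "t \<in> seg J"
    and ap: "x + (bseg_next J + t) = 2 * y"
  shows False
  using J
proof (cases rule: above_k_cases)
  case 1
  then show False
    using bseg_bounds[OF J x] bseg_bounds[OF J y] seg_nonneg[OF t] ap bseg_max_k
      bseg_next_ge[of k] seg_next_eq[OF l_le_k] lam_le_c by simp
next
  case (2 J')
  have J': "l \<le> J'" using 2 l_le_k by simp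
  define s where "s = bseg_max J - y"
  have max: "bseg_max J = bseg_next J' + seg_max J'" using bseg_max_Suc[OF 2(2)] 2(1) by simp
  have x_eq: "x = lam - 1 - 2 * s - t"
    using ap bseg_next_Suc[OF 2(2)] 2(1) s_def by simp
  have "0 \<le> s" "0 \<le> x" "0 \<le> t"
    using s_def bseg_bounds[OF J y] bseg_bounds[OF J x] seg_nonneg[OF t] by simp_all
  then have "x < lam" "2 * s < lam" using x_eq by simp_all
  then have "x \<in> seg k"
    using bseg_low[OF J x] lam_less_seg_next[OF l_le_k] by simp
  moreover have "bseg_max J' < y"
    using \<open>2 * s < lam\<close> \<open>0 \<le> s\<close> s_def max bseg_max_less_next[OF 2(2)] lam_le_seg_max[OF J']
    by simp
  then have "seg_next J' + (y - bseg_next J') \<in> seg J"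
    using seg_Suc_upper[OF J' bseg_top[OF 2(2)]] y 2(1) by simp
  moreover have "seg_next J + t \<in> seg (Suc J)" using seg_Suc_upper J l_le_k t by simp
  moreover have "x + (seg_next J + t) = 2 * (seg_next J' + (y - bseg_next J'))"
    using x_eq s_def max seg_next_eq[of J] seg_max_Suc[OF J'] 2(1) J l_le_k by simp
  ultimately have "x = seg_next J + t"
    using terms_no_ap seg_subset_terms by blast
  then show False
    using \<open>x < lam\<close> lam_less_seg_next[of J] seg_nonneg[OF t] J l_le_k by simp
qed

lemma bseg_Suc_le:
  assumes J: "k \<le> J" and x: "x \<in> bseg (Suc J)" and y: "y \<in> bseg J" and "x \<le> y"
  shows "x \<in> bseg J"
proof (cases rule: bseg_SucE[OF J x])
  case (2 t)
  then show ?thesis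
    using \<open>x \<le> y\<close> bseg_bounds[OF J y] bseg_max_less_next[OF J] seg_nonneg[of t J] by simp
qed

lemma ap_top_top:
  assumes J: "k \<le> J" and x: "x \<in> bseg (Suc J)" and ty: "ty \<in> seg J" and tz: "tz \<in> seg J"
    and ap: "x + (bseg_next J + tz) = 2 * (bseg_next J + ty)"
  shows "x = bseg_next J + tz"
proof (cases rule: bseg_SucE[OF J x])
  case 1
  then have False
    using bseg_bounds[OF J, of x] bseg_max_add_seg_max_less_next[OF J] ap seg_nonneg[OF ty]
      seg_le_max[OF tz] by simp
  then show ?thesis ..
next
  case (2 tx)
  then have "tx + tz = 2 * ty" using ap by simp
  then show ?thesis using terms_no_ap seg_subset_terms 2 ty tz by blast
qed

lemma three_free_int_bseg: "k \<le> J \<Longrightarrow> three_free_int (bseg J)"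
proof (induction J rule: dec_induct)
  case base
  then show ?case
    using bseg_k terms_no_ap seg_subset_terms by (intro three_free_intI) blast
next
  case (step J)
  show ?case
  proof (rule three_free_intI)
    fix x y z
    assume xyz: "x \<in> bseg (Suc J)" "y \<in> bseg (Suc J)" "z \<in> bseg (Suc J)"
      and ap: "x + z = 2 * y" and "x < z"
    then have "x < y" "y < z" by simp_all
    show False
    proof (cases "z \<in> bseg J")
      case True
      then have "y \<in> bseg J" "x \<in> bseg J"
        using bseg_Suc_le[OF step.hyps(1)] xyz \<open>x < y\<close> \<open>y < z\<close> by (meson less_imp_le)+
      then show False using step.IH True ap \<open>x < z\<close> three_free_intD by fastforce
    next
      case False
      then obtain tz where tz: "tz \<in> seg J" "z = bseg_next J + tz"
        using bseg_SucE[OF step.hyps(1) xyz(3)] by metis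
      show False
      proof (cases rule: bseg_SucE[OF step.hyps(1) xyz(2)])
        case 1
        then have "x \<in> bseg J" using bseg_Suc_le[OF step.hyps(1) xyz(1)] \<open>x < y\<close> by simp
        then show False using no_ap_low_low_top[OF step.hyps(1) _ 1 tz(1)] ap tz(2) by simp
      next
        case (2 ty)
        then show False
          using ap_top_top[OF step.hyps(1) xyz(1) 2(1) tz(1)] ap tz(2) \<open>x < z\<close> by simp
      qed
    qed
  qed
qed

lemma reflect_below_next:
  assumes J: "k \<le> J" and x: "bseg_max (Suc J) < x" "x < bseg_next (Suc J)"
  shows "\<exists>y\<in>bseg (Suc J). \<exists>w\<in>bseg (Suc J). w < y \<and> x = 2 * y - w"
proof -
  let ?D = "bseg_next J" and ?N = "seg_next J"
  have lJ: "l \<le> J" using J l_le_k by simp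
  have max: "bseg_max (Suc J) = ?D + seg_max J" by (rule bseg_max_Suc[OF J])
  have top: "?D + u \<in> bseg (Suc J)" if "u \<in> seg J" for u using that by (rule bseg_Suc_upper[OF J])
  show ?thesis
  proof (cases "x < ?D + ?N")
    case True
    then obtain u v where "u \<in> seg J" "v \<in> seg J" "v < u" "x - ?D = 2 * u - v"
      using seg_gap[OF lJ, of "x - ?D"] x(1) max by auto
    then show ?thesis using top by (intro bexI[of _ "?D + u"] bexI[of _ "?D + v"]) auto
  next
    case False
    then obtain u w where u: "u \<in> seg J" and w: "w \<in> bseg J"
      and eq: "x - ?D - ?N = shift J + 2 * u - w"
      using bseg_shift_reflect[OF J, of "x - ?D - ?N"] x(2) bseg_next_Suc_add[OF J] by auto
    have "w < ?D + u"
      using bseg_bounds[OF J w] bseg_max_less_next[OF J] seg_nonneg[OF u] by simp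
    moreover have "w \<in> bseg (Suc J)" using w bseg_mono[of J "Suc J"] by auto
    moreover have "x = 2 * (?D + u) - w" using eq unfolding bseg_next_def by simp
    ultimately show ?thesis using top[OF u] by blast
  qed
qed

lemma reflect_above_next:
  assumes J: "k \<le> J" and x: "bseg_next (Suc J) < x" "x \<le> bseg_max (Suc (Suc J))"
    and "x \<notin> range b"
  shows "\<exists>y\<in>bseg (Suc (Suc J)). \<exists>w\<in>bseg (Suc (Suc J)). w < y \<and> x = 2 * y - w"
proof -
  let ?D = "bseg_next (Suc J)" and ?t = "x - bseg_next (Suc J)"
  have J1: "k \<le> Suc J" and lJ: "l \<le> J" using J l_le_k by simp_all
  have top: "?D + u \<in> bseg (Suc (Suc J))" if "u \<in> seg (Suc J)" for u
    using that by (rule bseg_Suc_upper[OF J1])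
  have "?t \<notin> seg (Suc J)" using top bseg_subset_range \<open>x \<notin> range b\<close> by force
  moreover have "0 < ?t" "?t \<le> seg_max (Suc J)" using x bseg_max_Suc[OF J1] by simp_all
  ultimately consider u v where "u \<in> seg (Suc J)" "v \<in> seg (Suc J)" "v < u" "?t = 2 * u - v"
    | p v where "p \<in> seg J" "v \<in> terms" "v < lam"
      "seg_next (Suc J) + ?t = 2 * (seg_next J + p) - v"
    using top_block_reflect[OF lJ] by blast
  then show ?thesis
  proof cases
    case (1 u v)
    then show ?thesis using top by (intro bexI[of _ "?D + u"] bexI[of _ "?D + v"]) auto
  next
    case (2 p v)
    \<comment> \<open>since the shift doubles from block J to block J + 1, the reflection in a lifts to b\<close>
    have "x = 2 * (bseg_next J + p) - v"
      using 2(4) shift_Suc[OF J] unfolding bseg_next_def by simp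
    moreover have "bseg_next J + p \<in> bseg (Suc (Suc J))"
      using bseg_Suc_upper[OF J 2(1)] bseg_mono[of "Suc J" "Suc (Suc J)"] by auto
    moreover have "v < seg_next k" using 2(3) lam_less_seg_next[OF l_le_k] by simp
    then have "v \<in> bseg (Suc (Suc J))"
      using terms_less_next 2(2) seg_k_subset_bseg[of "Suc (Suc J)"] J by auto
    moreover have "v < bseg_next J + p"
      using \<open>v < seg_next k\<close> seg_next_mono[OF J] bseg_next_ge[OF J] c_nonneg seg_nonneg[OF 2(1)]
      by simp
    ultimately show ?thesis by blast
  qed
qed

lemma reflect_in_next_block:
  assumes J: "Suc k \<le> J" and x: "bseg_max J < x" "x \<le> bseg_max (Suc J)" "x \<notin> range b"
  shows "\<exists>y\<in>bseg (Suc J). \<exists>w\<in>bseg (Suc J). w < y \<and> x = 2 * y - w"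
proof -
  obtain J' where J': "J = Suc J'" "k \<le> J'" using J by (cases J) auto
  have "bseg_next J = b (2^J)" using b_pow2[of J] J by simp
  then have "x \<noteq> bseg_next J" using x(3) by auto
  then consider "x < bseg_next J" | "bseg_next J < x" by linarith
  then show ?thesis
  proof cases
    case 1
    then have "\<exists>y\<in>bseg J. \<exists>w\<in>bseg J. w < y \<and> x = 2 * y - w"
      using reflect_below_next[OF J'(2)] x(1) J'(1) by simp
    moreover have "bseg J \<subseteq> bseg (Suc J)" by (rule bseg_mono) simp
    ultimately show ?thesis by blast
  next
    case 2
    then show ?thesis using reflect_above_next[OF J'(2)] x J'(1) by simp
  qed
qed

lemma reflect_bseg:
  "Suc k \<le> J \<Longrightarrow> bseg_max (Suc k) < x \<Longrightarrow> x \<le> bseg_max J \<Longrightarrow> x \<notin> range b \<Longrightarrow>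
   \<exists>y\<in>bseg J. \<exists>w\<in>bseg J. w < y \<and> x = 2 * y - w"
proof (induction J rule: dec_induct)
  case (step J)
  show ?case
  proof (cases "x \<le> bseg_max J")
    case True
    then obtain y w where "y \<in> bseg J" "w \<in> bseg J" "w < y" "x = 2 * y - w" using step by blast
    moreover have "bseg J \<subseteq> bseg (Suc J)" by (rule bseg_mono) simp
    ultimately show ?thesis by blast
  next
    case False
    then show ?thesis using reflect_in_next_block[OF step.hyps(1)] step.prems by simp
  qed
qed simp

lemma b_block: "k \<le> J \<Longrightarrow> 2^J \<le> i \<Longrightarrow> i < 2^Suc J \<Longrightarrow> b i = bseg_next J + int (a (i - 2^J))"
  using b_high[of J "i - 2^J"] by simp

lemma b_less_Suc: "b i < b (Suc i)"
proof (cases "Suc i < 2^k")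
  case True
  then show ?thesis using b_low by simp
next
  case False
  define J where "J = dyadic_block (Suc i)"
  have J: "2^J \<le> Suc i" "Suc i < 2^Suc J"
    unfolding J_def using dyadic_block_bounds[of "Suc i"] by simp_all
  then have "(2::nat)^k < 2^Suc J" using False by linarith
  then have "k \<le> J" by (subst (asm) power_strict_increasing_iff) simp_all
  show ?thesis
  proof (cases "Suc i = 2^J")
    case True
    then have "b i = bseg_max J" unfolding bseg_max_def True[symmetric] by simp
    then show ?thesis using b_pow2[OF \<open>k \<le> J\<close>] True bseg_max_less_next[OF \<open>k \<le> J\<close>] by simp
  next
    case False
    then show ?thesis using b_block[OF \<open>k \<le> J\<close>] J by simp
  qed
qed

lemma strict_mono_b: "strict_mono b"
  unfolding strict_mono_Suc_iff using b_less_Suc by blast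

lemma int_le_b: "int i \<le> b i"
proof (induction i)
  case 0
  then show ?case using b_low[of 0] by simp
next
  case (Suc i)
  then show ?case using b_less_Suc[of i] by simp
qed

lemma b_nonneg: "0 \<le> b i"
  using int_le_b[of i] by simp

lemma b_first_block: "2^k \<le> i \<Longrightarrow> i < 2^Suc k \<Longrightarrow> b i = int (a i) + c"
  unfolding b_def using dyadic_block_eqI[of k i] by simp

lemma three_free_int_range_b: "three_free_int (range b)"
proof (rule three_free_intI)
  fix x y z assume xyz: "x \<in> range b" "y \<in> range b" "z \<in> range b" "x + z = 2 * y"
  then obtain i j m where ijm: "x = b i" "y = b j" "z = b m" by blast
  define J where "J = k + i + j + m + 1"
  have "i < 2^J" "j < 2^J" "m < 2^J"
    using less_exp[of J] unfolding J_def by linarith+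
  then have "x \<in> bseg J" "y \<in> bseg J" "z \<in> bseg J" unfolding bseg_def using ijm by auto
  moreover have "three_free_int (bseg J)" using three_free_int_bseg J_def by simp
  ultimately have "x = z" using three_free_intD xyz(4) by blast
  then show "x < z \<Longrightarrow> False" by simp
qed

lemma reflect_range_b:
  assumes "bseg_max (Suc k) < x" "x \<notin> range b"
  shows "\<exists>y\<in>range b. \<exists>w\<in>range b. w < y \<and> x = 2 * y - w"
proof -
  define J where "J = Suc k + nat x"
  have "int (2^J - 1) \<le> bseg_max J" unfolding bseg_max_def using int_le_b by blast
  moreover have "J < 2^J" using less_exp by blast
  ultimately have "x \<le> bseg_max J" unfolding J_def using assms by linarith
  then show ?thesis
    using reflect_bseg[of J x] assms J_def bseg_subset_range by fastforce
qed

definition b_nat :: "nat \<Rightarrow> nat" where "b_nat i = nat (b i)"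

lemma int_b_nat [simp]: "int (b_nat i) = b i"
  unfolding b_nat_def using b_nonneg by simp

lemma strict_mono_b_nat: "strict_mono b_nat"
proof (rule strict_monoI)
  fix i j :: nat assume "i < j"
  then have "int (b_nat i) < int (b_nat j)" using strict_mono_b by (simp add: strict_mono_less)
  then show "b_nat i < b_nat j" by (simp only: of_nat_less_iff)
qed

lemma three_free_range_b_nat: "three_free (range b_nat)"
  unfolding three_free_def
proof (intro ballI impI notI)
  fix x y z assume "x \<in> range b_nat" "y \<in> range b_nat" "z \<in> range b_nat" "x < y" "y < z"
    "x + z = 2 * y"
  then have "int x \<in> range b" "int y \<in> range b" "int z \<in> range b" "int x + int z = 2 * int y"
    by (auto simp flip: int_b_nat)
  then have "x = z" using three_free_int_range_b three_free_intD by fastforce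
  then show False using \<open>x < y\<close> \<open>y < z\<close> by simp
qed

lemma greedy_above_b_nat: "greedy_above b_nat (b_nat (2^Suc k - 1))"
  unfolding greedy_above_def
proof (intro allI impI)
  fix x assume x: "b_nat (2^Suc k - 1) < x" "x \<notin> range b_nat"
  then have "bseg_max (Suc k) < int x" unfolding bseg_max_def by (simp flip: int_b_nat)
  moreover have "int x \<notin> range b"
  proof
    assume "int x \<in> range b"
    then obtain i where "int x = b i" by blast
    then have "x = b_nat i" unfolding b_nat_def by simp
    then show False using x(2) by simp
  qed
  ultimately obtain i j where "b j < b i" "b i < int x" "int x = 2 * b i - b j"
    using reflect_range_b by fastforce
  then have "b_nat j < b_nat i" "b_nat i < x" "b_nat j + x = 2 * b_nat i"
    by (simp_all flip: int_b_nat)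
  then show "\<exists>p q. p \<in> range b_nat \<and> q \<in> range b_nat \<and> p < q \<and> q < x \<and> p + x = 2 * q"
    by blast
qed

lemma initial_set_eq:
  "{a i | i. i < 2^k} \<union> {nat (c + int (a i)) | i. 2^k \<le> i \<and> i < 2^(k+1)} =
   b_nat ` {..<2^Suc k}"
proof -
  have low: "b_nat i = a i" if "i < 2^k" for i using that b_low unfolding b_nat_def by simp
  have high: "b_nat i = nat (c + int (a i))" if "2^k \<le> i" "i < 2^Suc k" for i
    using that b_first_block unfolding b_nat_def by (simp add: add.commute)
  show ?thesis
  proof (intro set_eqI iffI)
    fix x assume "x \<in> {a i | i. i < 2^k} \<union> {nat (c + int (a i)) | i. 2^k \<le> i \<and> i < 2^(k+1)}"
    then consider i where "i < 2^k" "x = a i"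
      | i where "2^k \<le> i" "i < 2^(k+1)" "x = nat (c + int (a i))"
      by blast
    then show "x \<in> b_nat ` {..<2^Suc k}"
    proof cases
      case (1 i)
      then show ?thesis using low[of i] by (intro image_eqI[of _ _ i]) auto
    next
      case (2 i)
      then show ?thesis using high[of i] by (intro image_eqI[of _ _ i]) auto
    qed
  next
    fix x assume "x \<in> b_nat ` {..<2^Suc k}"
    then obtain i where "i < 2^Suc k" "x = b_nat i" by blast
    then show "x \<in> {a i | i. i < 2^k} \<union> {nat (c + int (a i)) | i. 2^k \<le> i \<and> i < 2^(k+1)}"
      using low high by (cases "i < 2^k") auto
  qed
qed

lemma stanley_b_nat: "stanley (b_nat ` {..<2^Suc k}) = b_nat"
proof -
  let ?I = "b_nat ` {..<2^Suc k}"
  have card: "card ?I = 2^Suc k"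
    using card_image[OF strict_mono_imp_inj_on[OF strict_mono_b_nat]] by simp
  show ?thesis
  proof (rule stanley_eqI)
    show "0 < card ?I" "strict_mono b_nat" "three_free (range b_nat)"
      using card strict_mono_b_nat three_free_range_b_nat by simp_all
    show "\<forall>i<card ?I. b_nat i = sorted_list_of_set ?I ! i"
      using card sorted_list_of_set_image_lessThan[OF strict_mono_b_nat] by simp
    show "greedy_above b_nat (b_nat (card ?I - 1))"
      using card greedy_above_b_nat by simp
  qed
qed

lemma regular_b_nat: "regular_with_core b_nat a"
  unfolding regular_with_core_def
proof (rule exI[of _ lam], rule exI[of _ 0], intro conjI exI[of _ "Suc k"])
  show "independent a lam" unfolding independent_def using doubling by blast
  show "\<forall>K\<ge>Suc k. \<forall>i<2^K. b_nat (nat (2^K - 0) + i) = b_nat (nat (2^K - 0)) + a i \<and>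
      int (b_nat (nat (2^K - 0))) = 2 * int (b_nat (nat (2^K - 0 - 1))) - lam + 1"
  proof (intro allI impI conjI)
    fix K i :: nat assume K: "Suc k \<le> K" and i: "i < 2^K"
    have n: "nat ((2::int)^K - 0) = 2^K" "nat ((2::int)^K - 0 - 1) = 2^K - 1"
      by (simp_all add: nat_diff_distrib nat_power_eq)
    obtain K' where K': "K = Suc K'" "k \<le> K'" using K by (cases K) auto
    have "int (b_nat (2^K + i)) = int (b_nat (2^K) + a i)"
      using b_high[of K i] b_pow2[of K] K i by simp
    then show "b_nat (nat (2^K - 0) + i) = b_nat (nat (2^K - 0)) + a i"
      unfolding n by (simp only: of_nat_eq_iff)
    show "int (b_nat (nat (2^K - 0))) = 2 * int (b_nat (nat (2^K - 0 - 1))) - lam + 1"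
      unfolding n using b_pow2[of K] bseg_next_Suc[OF K'(2)] K' unfolding bseg_max_def by simp
  qed
qed

end

theorem theorem4:
  fixes A :: "nat set" and lam :: int and l k :: nat and c :: int
  assumes "finite A" and "three_free A" and "0 \<in> A"
    and "independent (stanley A) lam"
    and "adequate A lam l"
    and "\<forall>k0. adequate A lam k0 \<longrightarrow> l \<le> k0"
    and "l \<le> k"
    and "lam \<le> c" and "c \<le> int (stanley A (2^k - 2^l)) - lam"
  shows "three_free (Ak_set A k c) \<and>
         regular_with_core (stanley (Ak_set A k c)) (stanley A)"
proof -
  interpret seed: stanley_seed A using assms(1-3) by unfold_locales auto
  interpret shifted_sequence "stanley A" lam l k c
  proof unfold_locales
    show "greedy_above (stanley A) (stanley A (2^l - 1))"
      using greedy_above_adequate assms(1-3,5) unfolding stanley_init_def by blast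
    show "indep_eqs (stanley A) lam J" if "l \<le> J" for J
      using assms(5) that unfolding adequate_def by blast
  qed (use assms seed.strict_mono_stanley seed.three_free_range_stanley stanley_0 in auto)
  have Ak: "Ak_set A k c = b_nat ` {..<2^Suc k}"
    unfolding Ak_set_def by (rule initial_set_eq)
  have "three_free (Ak_set A k c)"
    unfolding Ak by (rule three_free_subset[OF three_free_range_b_nat]) auto
  then show ?thesis using Ak stanley_b_nat regular_b_nat by simp
qed

end
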